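(* A finite, simple, connected graph $G$ is randomly weak total $3$-dimensional if and only if $G$ is a cycle of odd order.
   Context: $d(x,y)$ is the shortest-path distance. A set $W\subseteq V(G)$ is a resolving set if for every two distinct vertices $y,z$ there is $x\in W$ with $d(y,x)\ne d(z,x)$. A set $W$ is a weak total resolving set (WTR-set) if $W$ is resolving and, for every $w\in W$ and every $x\in V(G)\setminus W$, there is $w'\in W\setminus\{w\}$ with $d(x,w')\ne d(w,w')$. $\dim_{wt}(G)$ is the minimum cardinality of a WTR-set. The weak total resolving number $res_{wt}(G)$ is the minimum positive integer $r$ such that every set of $r$ vertices of $G$ is a WTR-set. $G$ is randomly weak total $k$-dimensional if $\dim_{wt}(G)=res_{wt}(G)=k$. *)

theory Defs
  imports Main
begin

definition simple_graph :: "'a set \<Rightarrow> ('a \<Rightarrow> 'a \<Rightarrow> bool) \<Rightarrow> bool" where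
  "simple_graph V E \<longleftrightarrow> finite V \<and> V \<noteq> {} \<and>
     (\<forall>x y. E x y \<longrightarrow> x \<in> V \<and> y \<in> V) \<and>
     (\<forall>x y. E x y \<longrightarrow> E y x) \<and> (\<forall>x. \<not> E x x)"

inductive walk :: "('a \<Rightarrow> 'a \<Rightarrow> bool) \<Rightarrow> nat \<Rightarrow> 'a \<Rightarrow> 'a \<Rightarrow> bool" for E where
  walk0: "walk E 0 x x"
| walkS: "E x y \<Longrightarrow> walk E n y z \<Longrightarrow> walk E (Suc n) x z"

definition connected_graph :: "'a set \<Rightarrow> ('a \<Rightarrow> 'a \<Rightarrow> bool) \<Rightarrow> bool" where
  "connected_graph V E \<longleftrightarrow> simple_graph V E \<and> (\<forall>x\<in>V. \<forall>y\<in>V. \<exists>n. walk E n x y)"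

definition gdist :: "('a \<Rightarrow> 'a \<Rightarrow> bool) \<Rightarrow> 'a \<Rightarrow> 'a \<Rightarrow> nat" where
  "gdist E x y = (LEAST n. walk E n x y)"

definition resolving_set :: "'a set \<Rightarrow> ('a \<Rightarrow> 'a \<Rightarrow> bool) \<Rightarrow> 'a set \<Rightarrow> bool" where
  "resolving_set V E W \<longleftrightarrow> W \<subseteq> V \<and>
     (\<forall>y\<in>V. \<forall>z\<in>V. y \<noteq> z \<longrightarrow> (\<exists>x\<in>W. gdist E y x \<noteq> gdist E z x))"

definition wtr_set :: "'a set \<Rightarrow> ('a \<Rightarrow> 'a \<Rightarrow> bool) \<Rightarrow> 'a set \<Rightarrow> bool" where
  "wtr_set V E W \<longleftrightarrow> resolving_set V E W \<and>
     (\<forall>w\<in>W. \<forall>x\<in>V - W. \<exists>w'\<in>W - {w}. gdist E x w' \<noteq> gdist E w w')"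

definition dim_wt :: "'a set \<Rightarrow> ('a \<Rightarrow> 'a \<Rightarrow> bool) \<Rightarrow> nat" where
  "dim_wt V E = (LEAST k. \<exists>W. wtr_set V E W \<and> card W = k)"

definition res_wt :: "'a set \<Rightarrow> ('a \<Rightarrow> 'a \<Rightarrow> bool) \<Rightarrow> nat" where
  "res_wt V E = (LEAST r. 0 < r \<and> (\<forall>W. W \<subseteq> V \<and> card W = r \<longrightarrow> wtr_set V E W))"

definition randomly_weak_total_dim :: "'a set \<Rightarrow> ('a \<Rightarrow> 'a \<Rightarrow> bool) \<Rightarrow> nat \<Rightarrow> bool" where
  "randomly_weak_total_dim V E k \<longleftrightarrow> dim_wt V E = k \<and> res_wt V E = k"

definition is_cycle_graph :: "'a set \<Rightarrow> ('a \<Rightarrow> 'a \<Rightarrow> bool) \<Rightarrow> bool" where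
  "is_cycle_graph V E \<longleftrightarrow> (\<exists>n f. 3 \<le> n \<and> bij_betw f {0..<n} V \<and>
     (\<forall>i<n. \<forall>j<n. E (f i) (f j) \<longleftrightarrow> (j = Suc i mod n \<or> i = Suc j mod n)))"

end

theory Submission
  imports Defs
begin

text \<open>
  By the definitions, \<open>dim_wt = res_wt = 3\<close> says that every triple of vertices, but no set of at
  most two vertices, is a WTR-set. If all triples are WTR-sets, a vertex \<open>v\<close> cannot have three
  distinct neighbours \<open>a\<close>, \<open>b\<close>, \<open>c\<close>: the triple \<open>{a, v, c}\<close> must separate \<open>b\<close> from \<open>a\<close>, so the
  pairs \<open>b c\<close> and \<open>a c\<close> differ in adjacency, and likewise for the two other pairs, which is
  impossible for three truth values. A vertex \<open>u\<close> of degree at most 1 would then make the graph a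
  path starting at \<open>u\<close>, and \<open>u\<close> together with the vertex farthest from \<open>u\<close> would be a WTR-set of
  size 2. So the graph is 2-regular, i.e. a cycle \<open>C_n\<close>.

  On \<open>C_n\<close> two positions are equidistant from \<open>p\<close> iff they coincide or are mirror images through
  \<open>p\<close> (modulo \<open>n\<close>). For odd \<open>n\<close> two distinct positions are mirror images through at most one
  point, so every pair of vertices resolves the graph and every triple is a WTR-set, while no pair
  \<open>{u, v}\<close> is one: the mirror image of \<open>u\<close> through \<open>v\<close> is a third vertex at the same distance
  from \<open>v\<close>. For even \<open>n\<close>, the positions \<open>0\<close> and \<open>2\<close> are mirror images through both \<open>1\<close> and its
  antipode, so the triple formed by \<open>0\<close> and these two centres is not a WTR-set.
\<close>

section \<open>Walks and distances\<close>

lemma walk_snoc: "walk E m x y \<Longrightarrow> E y z \<Longrightarrow> walk E (Suc m) x z"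
  by (induction rule: walk.induct) (auto intro: walk.intros)

lemma walk_append: "walk E a x y \<Longrightarrow> walk E b y z \<Longrightarrow> walk E (a + b) x z"
  by (induction rule: walk.induct) (auto intro: walk.intros)

lemma walk_split: "walk E (a + b) x z \<Longrightarrow> \<exists>m. walk E a x m \<and> walk E b m z"
proof (induction a arbitrary: x)
  case 0
  then show ?case by (auto intro: walk.intros)
next
  case (Suc a)
  then obtain y where "E x y" "walk E (a + b) y z"
    by (auto elim: walk.cases)
  moreover obtain m where "walk E a y m" "walk E b m z"
    using Suc.IH[OF \<open>walk E (a + b) y z\<close>] by blast
  ultimately show ?case by (auto intro: walk.intros)
qed

lemma walk_0_iff: "walk E 0 x y \<longleftrightarrow> x = y"
  by (auto elim: walk.cases intro: walk.intros)

lemma walk_Suc_0_iff: "walk E (Suc 0) x y \<longleftrightarrow> E x y"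
  by (auto elim: walk.cases intro: walk.intros simp: walk_0_iff)

lemma gdist_le: "walk E k x y \<Longrightarrow> gdist E x y \<le> k"
  unfolding gdist_def by (rule Least_le)

lemma gdist_self [simp]: "gdist E x x = 0"
  using gdist_le[of E 0 x x] by (simp add: walk.intros)

locale connected_simple_graph =
  fixes V :: "'a set" and E :: "'a \<Rightarrow> 'a \<Rightarrow> bool"
  assumes connected: "connected_graph V E"

begin

lemma finite_V: "finite V"
  and edge_sym: "E x y \<Longrightarrow> E y x"
  and edge_irrefl: "\<not> E x x"
  and edge_in_V: "E x y \<Longrightarrow> x \<in> V" "E x y \<Longrightarrow> y \<in> V"
  using connected by (auto simp: connected_graph_def simple_graph_def)

lemma walk_reverse: "walk E k x y \<Longrightarrow> walk E k y x"
  by (induction rule: walk.induct) (auto intro: walk.intros walk_snoc edge_sym)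

lemma walk_in_V: "walk E k x y \<Longrightarrow> x \<in> V \<Longrightarrow> y \<in> V"
  by (induction rule: walk.induct) (auto dest: edge_in_V)

lemma gdist_walk: "x \<in> V \<Longrightarrow> y \<in> V \<Longrightarrow> walk E (gdist E x y) x y"
  using connected unfolding gdist_def connected_graph_def by (meson LeastI_ex)

lemma gdist_eq_0_iff: "x \<in> V \<Longrightarrow> y \<in> V \<Longrightarrow> gdist E x y = 0 \<longleftrightarrow> x = y"
  using gdist_walk[of x y] by (auto simp: walk_0_iff)

lemma gdist_sym: "x \<in> V \<Longrightarrow> y \<in> V \<Longrightarrow> gdist E x y = gdist E y x"
  using gdist_le[OF walk_reverse[OF gdist_walk]] by (metis le_antisym)

lemma gdist_triangle:
  "x \<in> V \<Longrightarrow> y \<in> V \<Longrightarrow> z \<in> V \<Longrightarrow> gdist E x z \<le> gdist E x y + gdist E y z"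
  by (rule gdist_le[OF walk_append[OF gdist_walk gdist_walk]])

lemma gdist_eq_1_iff: "x \<in> V \<Longrightarrow> y \<in> V \<Longrightarrow> gdist E x y = 1 \<longleftrightarrow> E x y"
  using gdist_walk[of x y] gdist_le[of E 1 x y] gdist_eq_0_iff[of x y] edge_irrefl
  by (auto simp: walk_Suc_0_iff le_Suc_eq)

lemma gdist_split:
  assumes "u \<in> V" "z \<in> V" "i \<le> gdist E u z"
  shows "\<exists>m\<in>V. gdist E u m = i \<and> gdist E m z = gdist E u z - i"
proof -
  have "walk E (i + (gdist E u z - i)) u z"
    using gdist_walk[OF assms(1,2)] assms(3) by simp
  then obtain m where m: "walk E i u m" "walk E (gdist E u z - i) m z"
    using walk_split by metis
  have "m \<in> V" using walk_in_V[OF m(1) assms(1)] .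
  with gdist_le[OF m(1)] gdist_le[OF m(2)] gdist_triangle[OF assms(1) _ assms(2)]
  show ?thesis using assms(3) by (intro bexI[of _ m]) force+
qed

lemma gdist_Suc_predecessor:
  "u \<in> V \<Longrightarrow> y \<in> V \<Longrightarrow> gdist E u y = Suc k \<Longrightarrow> \<exists>p\<in>V. E p y \<and> gdist E u p = k"
  using gdist_split[of u y k] gdist_eq_1_iff by fastforce

lemma gdist_common_neighbour:
  assumes "E v x" "E v y" "x \<noteq> y"
  shows "gdist E x y = (if E x y then 1 else 2)"
proof -
  have V: "v \<in> V" "x \<in> V" "y \<in> V" using assms edge_in_V by blast+
  have "gdist E x y \<le> gdist E x v + gdist E v y" using gdist_triangle V by blast
  also have "\<dots> = 2" using V assms gdist_eq_1_iff edge_sym by (metis one_add_one)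
  finally show ?thesis
    using gdist_eq_0_iff[OF V(2,3)] gdist_eq_1_iff[OF V(2,3)] assms(3) by auto
qed

lemma exists_other_vertex: "2 \<le> card V \<Longrightarrow> \<exists>u\<in>V. u \<noteq> v"
  by (metis card_le_Suc0_iff_eq finite_V not_less_eq_eq numeral_2_eq_2)

end

section \<open>Weak total resolving sets\<close>

lemma resolving_set_mono:
  "resolving_set V E W \<Longrightarrow> W \<subseteq> W' \<Longrightarrow> W' \<subseteq> V \<Longrightarrow> resolving_set V E W'"
  unfolding resolving_set_def by blast

lemma wtr_set_if_pairs_resolving:
  assumes pairs: "\<And>a b. a \<in> V \<Longrightarrow> b \<in> V \<Longrightarrow> a \<noteq> b \<Longrightarrow> resolving_set V E {a, b}"
    and "W \<subseteq> V" "3 \<le> card W"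
  shows "wtr_set V E W"
proof -
  have pair_in: "\<exists>a b. a \<noteq> b \<and> {a, b} \<subseteq> U" if "2 \<le> card U" for U :: "'a set"
    using that by (metis card_2_iff obtain_subset_with_card_n)
  have "2 \<le> card W" using assms(3) by linarith
  then obtain a b where "a \<noteq> b" "{a, b} \<subseteq> W"
    using pair_in by blast
  then have "resolving_set V E W"
    using pairs assms(2) resolving_set_mono by (metis insert_subset subset_trans)
  moreover have "\<exists>w'\<in>W - {w}. gdist E x w' \<noteq> gdist E w w'" if "w \<in> W" "x \<in> V - W" for w x
  proof -
    have "finite W" using assms(3) by (metis card.infinite not_numeral_le_zero)
    then have "2 \<le> card (W - {w})"
      using that(1) assms(3) by (simp add: card_Diff_singleton)
    then obtain a b where "a \<noteq> b" "{a, b} \<subseteq> W - {w}" using pair_in by blast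
    moreover have "resolving_set V E {a, b}" using calculation pairs assms(2) by blast
    moreover have "x \<noteq> w" "x \<in> V" "w \<in> V" using that assms(2) by auto
    ultimately show ?thesis unfolding resolving_set_def by blast
  qed
  ultimately show ?thesis unfolding wtr_set_def by blast
qed

lemma not_wtr_set_pair_if_equidistant:
  assumes "x \<in> V" "x \<noteq> u" "x \<noteq> v" "gdist E x v = gdist E u v"
  shows "\<not> wtr_set V E {u, v}"
  using assms unfolding wtr_set_def by (metis Diff_iff empty_iff insertCI insertE)

lemma triple_wtr_distinguishes:
  assumes triples: "\<forall>W\<subseteq>V. card W = 3 \<longrightarrow> wtr_set V E W"
    and "w \<in> V" "x \<in> V" "a \<in> V" "b \<in> V" "distinct [w, x, a, b]"
  shows "gdist E x a \<noteq> gdist E w a \<or> gdist E x b \<noteq> gdist E w b"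
proof -
  have "wtr_set V E {w, a, b}" using triples assms(2-6) by simp
  then show ?thesis using assms(2-6) unfolding wtr_set_def by auto
qed

context connected_simple_graph
begin

lemma wtr_set_V: "wtr_set V E V"
  unfolding wtr_set_def resolving_set_def
  by (metis Diff_iff gdist_eq_0_iff gdist_self subset_refl)

lemma not_wtr_set_if_card_le_1:
  assumes "2 \<le> card V" "card W \<le> 1"
  shows "\<not> wtr_set V E W"
proof
  assume wtr: "wtr_set V E W"
  then have "finite W" using finite_V finite_subset by (auto simp: wtr_set_def resolving_set_def)
  then consider "W = {}" | w where "W = {w}"
    using assms(2) by (metis card_0_eq card_1_singletonE le_Suc_eq One_nat_def le_zero_eq)
  then show False
  proof cases
    case 1
    obtain y z where "y \<in> V" "z \<in> V" "y \<noteq> z"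
      using assms(1) exists_other_vertex by (metis card.empty ex_in_conv not_numeral_le_zero)
    then show False using wtr 1 by (auto simp: wtr_set_def resolving_set_def)
  next
    case 2
    obtain x where "x \<in> V" "x \<noteq> w" using assms(1) exists_other_vertex by blast
    then show False using wtr 2 by (auto simp: wtr_set_def)
  qed
qed

lemma dim_wt_eq_iff:
  "dim_wt V E = k \<longleftrightarrow>
     (\<exists>W. wtr_set V E W \<and> card W = k) \<and> (\<forall>W. card W < k \<longrightarrow> \<not> wtr_set V E W)"
proof -
  define P where "P k \<longleftrightarrow> (\<exists>W. wtr_set V E W \<and> card W = k)" for k
  have "P (card V)" unfolding P_def using wtr_set_V by blast
  moreover have "dim_wt V E = (LEAST k. P k)"
    unfolding dim_wt_def P_def by simp
  ultimately have "dim_wt V E = k \<longleftrightarrow> P k \<and> (\<forall>r<k. \<not> P r)"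
    by (metis LeastI Least_equality not_less not_less_Least)
  then show ?thesis unfolding P_def by blast
qed

lemma res_wt_eq_iff:
  assumes "0 < k"
  shows "res_wt V E = k \<longleftrightarrow> (\<forall>W\<subseteq>V. card W = k \<longrightarrow> wtr_set V E W) \<and>
     (\<forall>r. 0 < r \<longrightarrow> r < k \<longrightarrow> (\<exists>W\<subseteq>V. card W = r \<and> \<not> wtr_set V E W))"
proof -
  define P where "P r \<longleftrightarrow> 0 < r \<and> (\<forall>W. W \<subseteq> V \<and> card W = r \<longrightarrow> wtr_set V E W)" for r
  \<comment> \<open>No subset has more than \<open>card V\<close> elements, so \<open>P\<close> holds vacuously there.\<close>
  have "P (Suc (card V))"
  proof -
    have "\<not> (W \<subseteq> V \<and> card W = Suc (card V))" for W
      using card_mono[OF finite_V, of W] by auto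
    then show ?thesis unfolding P_def by blast
  qed
  moreover have "res_wt V E = (LEAST r. P r)"
    unfolding res_wt_def P_def by simp
  ultimately have "res_wt V E = k \<longleftrightarrow> P k \<and> (\<forall>r<k. \<not> P r)"
    by (metis LeastI Least_equality not_less not_less_Least)
  then show ?thesis unfolding P_def using assms by blast
qed

lemma randomly_weak_total_dim_3_iff:
  "randomly_weak_total_dim V E 3 \<longleftrightarrow> 3 \<le> card V \<and>
     (\<forall>W\<subseteq>V. card W = 3 \<longrightarrow> wtr_set V E W) \<and> (\<forall>W. card W \<le> 2 \<longrightarrow> \<not> wtr_set V E W)"
proof -
  have below_3: "r < 3 \<longleftrightarrow> r \<le> 2" for r :: nat by linarith
  have "(\<exists>W. wtr_set V E W \<and> card W = 3) \<longleftrightarrow> 3 \<le> card V" if "\<forall>W\<subseteq>V. card W = 3 \<longrightarrow> wtr_set V E W"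
  proof
    assume "\<exists>W. wtr_set V E W \<and> card W = 3"
    then show "3 \<le> card V"
      using card_mono[OF finite_V] by (metis resolving_set_def wtr_set_def)
  next
    assume "3 \<le> card V"
    then show "\<exists>W. wtr_set V E W \<and> card W = 3"
      using that obtain_subset_with_card_n by metis
  qed
  moreover have "(\<forall>r. 0 < r \<longrightarrow> r < 3 \<longrightarrow> (\<exists>W\<subseteq>V. card W = r \<and> \<not> wtr_set V E W))"
    if "3 \<le> card V" "\<forall>W. card W \<le> 2 \<longrightarrow> \<not> wtr_set V E W"
  proof (intro allI impI)
    fix r :: nat assume "r < 3"
    moreover obtain W where "W \<subseteq> V" "card W = r"
      using \<open>r < 3\<close> \<open>3 \<le> card V\<close> obtain_subset_with_card_n
      by (metis less_imp_le_nat order.trans)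
    ultimately show "\<exists>W\<subseteq>V. card W = r \<and> \<not> wtr_set V E W"
      using that(2) below_3 by blast
  qed
  ultimately show ?thesis
    unfolding randomly_weak_total_dim_def dim_wt_eq_iff res_wt_eq_iff[of 3, simplified] below_3
    by blast
qed

end

section \<open>Graphs in which every triple is a WTR-set\<close>

context connected_simple_graph
begin

lemma degree_le_2_if_triples_wtr:
  assumes triples: "\<forall>W\<subseteq>V. card W = 3 \<longrightarrow> wtr_set V E W"
    and "E v a" "E v b" "E v c"
  shows "a = b \<or> a = c \<or> b = c"
proof (rule ccontr)
  assume "\<not> (a = b \<or> a = c \<or> b = c)"
  then have ne: "a \<noteq> b" "a \<noteq> c" "b \<noteq> c" "v \<noteq> a" "v \<noteq> b" "v \<noteq> c"
    using assms(2-4) edge_irrefl by auto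
  have V: "v \<in> V" "a \<in> V" "b \<in> V" "c \<in> V" using assms(2-4) edge_in_V by blast+
  have "gdist E a v = 1" "gdist E b v = 1" "gdist E c v = 1"
    using V assms(2-4) gdist_eq_1_iff edge_sym by blast+
  then have "gdist E b c \<noteq> gdist E a c" "gdist E c b \<noteq> gdist E a b" "gdist E c a \<noteq> gdist E b a"
    using triple_wtr_distinguishes[OF triples, of a b v c] triple_wtr_distinguishes[OF triples, of a c v b]
      triple_wtr_distinguishes[OF triples, of b c v a] V ne by auto
  then have "E b c \<noteq> E a c" "E c b \<noteq> E a b" "E c a \<noteq> E b a"
    using gdist_common_neighbour assms(2-4) ne by metis+
  then show False using edge_sym by blast
qed

lemma gdist_inj_on_from_pendant:
  assumes degree_le_2: "\<And>v a b c. E v a \<Longrightarrow> E v b \<Longrightarrow> E v c \<Longrightarrow> a = b \<or> a = c \<or> b = c"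
    and u: "u \<in> V" and pendant: "\<And>a b. E u a \<Longrightarrow> E u b \<Longrightarrow> a = b"
  shows "inj_on (gdist E u) V"
proof -
  have "y = y'" if "y \<in> V" "y' \<in> V" "gdist E u y = k" "gdist E u y' = k" for k y y'
    using that
  proof (induction k arbitrary: y y' rule: less_induct)
    case (less k)
    consider "k = 0" | "k = 1" | k' where "k = Suc (Suc k')"
      by (metis One_nat_def not0_implies_Suc)
    then show ?case
    proof cases
      case 1
      then show ?thesis using less.prems gdist_eq_0_iff[OF u] by auto
    next
      case 2
      then show ?thesis using less.prems gdist_eq_1_iff[OF u] pendant by auto
    next
      case 3
      \<comment> \<open>Both vertices hang off the unique vertex \<open>p\<close> of the previous layer, whose other
        neighbour \<open>q\<close> lies one layer further down.\<close>
      obtain p where p: "p \<in> V" "E p y" "gdist E u p = Suc k'"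
        using gdist_Suc_predecessor[OF u less.prems(1)] less.prems(3) 3 by auto
      obtain p' where p': "p' \<in> V" "E p' y'" "gdist E u p' = Suc k'"
        using gdist_Suc_predecessor[OF u less.prems(2)] less.prems(4) 3 by auto
      have "p' = p" using less.IH[of "Suc k'" p' p] 3 p p' by simp
      obtain q where q: "E q p" "gdist E u q = k'"
        using gdist_Suc_predecessor[OF u p(1,3)] by blast
      have "gdist E u q < gdist E u y" "gdist E u q < gdist E u y'"
        using q(2) less.prems(3,4) 3 by simp_all
      then have "q \<noteq> y" "q \<noteq> y'" by auto
      then show ?thesis
        using degree_le_2[of p q y y'] edge_sym[OF q(1)] p(2) p'(2) \<open>p' = p\<close> by blast
    qed
  qed
  then show ?thesis by (intro inj_onI) blast
qed

lemma wtr_pair_at_pendant: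
  assumes degree_le_2: "\<And>v a b c. E v a \<Longrightarrow> E v b \<Longrightarrow> E v c \<Longrightarrow> a = b \<or> a = c \<or> b = c"
    and u: "u \<in> V" and pendant: "\<And>a b. E u a \<Longrightarrow> E u b \<Longrightarrow> a = b"
    and "2 \<le> card V"
  shows "\<exists>z. z \<noteq> u \<and> wtr_set V E {u, z}"
proof -
  have inj: "inj_on (gdist E u) V"
    using degree_le_2 u pendant by (rule gdist_inj_on_from_pendant)
  have "Max (gdist E u ` V) \<in> gdist E u ` V" using finite_V u by (intro Max_in) auto
  then obtain z where z: "z \<in> V" "gdist E u z = Max (gdist E u ` V)" by auto
  have far: "gdist E u x \<le> gdist E u z" if "x \<in> V" for x
    using z finite_V that by simp
  obtain x0 where "x0 \<in> V" "x0 \<noteq> u" using exists_other_vertex assms(4) by blast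
  then have "u \<noteq> z" using far[of x0] gdist_eq_0_iff[OF u] by fastforce
  have dist_u: "gdist E y u \<noteq> gdist E y' u" if "y \<in> V" "y' \<in> V" "y \<noteq> y'" for y y'
    using inj_onD[OF inj _ that(1,2)] that gdist_sym[OF u that(1)] gdist_sym[OF u that(2)] by auto
  have "resolving_set V E {u, z}"
    unfolding resolving_set_def using u z(1) dist_u by blast
  moreover have "\<exists>w'\<in>{u, z} - {w}. gdist E x w' \<noteq> gdist E w w'"
    if w: "w \<in> {u, z}" and x: "x \<in> V - {u, z}" for w x
  proof (cases "w = u")
    case True
    \<comment> \<open>A shortest \<open>u\<close>--\<open>z\<close> path meets every layer, so it passes through \<open>x\<close>.\<close>
    obtain m where m: "m \<in> V" "gdist E u m = gdist E u x" "gdist E m z = gdist E u z - gdist E u x"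
      using gdist_split[OF u z(1) far[of x]] x by blast
    have "m = x" using inj_onD[OF inj m(2)] m(1) x by blast
    moreover have "gdist E u x \<noteq> 0" using gdist_eq_0_iff[OF u] x by blast
    ultimately have "gdist E x z < gdist E u z" using m far[of x] x by simp
    then show ?thesis using True \<open>u \<noteq> z\<close> by auto
  next
    case False
    then have "w = z" "x \<in> V" "x \<noteq> z" using w x by auto
    then have "gdist E x u \<noteq> gdist E w u" using dist_u[of x z] z(1) by simp
    then show ?thesis using \<open>u \<noteq> z\<close> \<open>w = z\<close> by blast
  qed
  ultimately have "wtr_set V E {u, z}" unfolding wtr_set_def by blast
  then show ?thesis using \<open>u \<noteq> z\<close> by (intro exI[of _ z]) simp
qed

end

section \<open>Connected 2-regular graphs are cycles\<close>

fun nonbacktracking_walk :: "('a \<Rightarrow> 'a \<Rightarrow> bool) \<Rightarrow> 'a \<Rightarrow> 'a \<Rightarrow> nat \<Rightarrow> 'a" where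
  "nonbacktracking_walk E x y 0 = x"
| "nonbacktracking_walk E x y (Suc 0) = y"
| "nonbacktracking_walk E x y (Suc (Suc k)) =
     (SOME z. E (nonbacktracking_walk E x y (Suc k)) z \<and> z \<noteq> nonbacktracking_walk E x y k)"

locale two_regular_graph = connected_simple_graph +
  assumes degree_le_2: "E v a \<Longrightarrow> E v b \<Longrightarrow> E v c \<Longrightarrow> a = b \<or> a = c \<or> b = c"
    and degree_ge_2: "v \<in> V \<Longrightarrow> \<exists>a b. a \<noteq> b \<and> E v a \<and> E v b"

begin

lemma other_neighbour: "E x y \<Longrightarrow> \<exists>z. E y z \<and> z \<noteq> x"
  using degree_ge_2 edge_in_V by metis

context
  fixes x y assumes xy: "E x y"

begin

abbreviation w :: "nat \<Rightarrow> 'a" where "w \<equiv> nonbacktracking_walk E x y"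

lemma nbw_edge: "E (w k) (w (Suc k))"
proof (induction k rule: nat_less_induct)
  case (1 k)
  show ?case
  proof (cases k)
    case (Suc k')
    then show ?thesis
      using someI_ex[OF other_neighbour[OF "1"[rule_format, of k']]] by simp
  qed (simp add: xy)
qed

lemma nbw_not_backtracking: "w (Suc (Suc k)) \<noteq> w k"
  using someI_ex[OF other_neighbour[OF nbw_edge[of k]]] by simp

lemma nbw_in_V: "w k \<in> V"
  using edge_in_V(1)[OF nbw_edge] .

lemma nbw_neighbours: "E (w (Suc k)) c \<Longrightarrow> c = w k \<or> c = w (Suc (Suc k))"
  using degree_le_2[OF edge_sym[OF nbw_edge[of k]] nbw_edge[of "Suc k"]] nbw_not_backtracking[of k]
  by metis

lemma nbw_first_repetition:
  assumes "i < n" "w i = w n" and first: "\<And>i j. i < j \<Longrightarrow> j < n \<Longrightarrow> w i \<noteq> w j"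
  shows "i = 0"
proof (rule ccontr)
  assume "i \<noteq> 0"
  then obtain i' where i': "i = Suc i'" using not0_implies_Suc by blast
  obtain n' where n': "n = Suc n'" using assms(1) less_imp_Suc_add by blast
  have "E (w (Suc i')) (w n')" using edge_sym[OF nbw_edge[of n']] assms(2) i' n' by simp
  then consider "w n' = w i'" | "w n' = w (Suc i)" using nbw_neighbours i' by blast
  then show False
  proof cases
    case 1
    then show False using first[of i' n'] assms(1) i' n' by auto
  next
    case 2
    consider "Suc i < n'" | "Suc i = n'" | "i = n'" using assms(1) n' by linarith
    then show False
      using 2 first[of "Suc i" n'] nbw_not_backtracking[of i] nbw_edge[of i] edge_irrefl
        assms(2) n' by cases auto
  qed
qed

lemma nbw_cycle_length:
  assumes "0 < n" "w n = w 0"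
  shows "3 \<le> n"
proof -
  have "n \<noteq> 1" using nbw_edge[of 0] edge_irrefl assms(2) by auto
  moreover have "n \<noteq> 2" using nbw_not_backtracking[of 0] assms(2) by (auto simp: numeral_2_eq_2)
  ultimately show ?thesis using assms(1) by linarith
qed

context
  fixes n assumes n: "3 \<le> n" and closing: "w n = w 0" and inj: "inj_on w {0..<n}"

begin

lemma nbw_mod: "w (Suc i mod n) = w (Suc i)" if "i < n"
  using closing that by (cases "Suc i = n") auto

lemma nbw_neighbours_mod:
  assumes "i < n" "E (w i) c"
  shows "c = w ((i + n - 1) mod n) \<or> c = w (Suc i mod n)"
proof (cases i)
  case 0
  have "E (w 0) (w (n - 1))" using edge_sym[OF nbw_edge[of "n - 1"]] closing n by simp
  moreover have "w 1 \<noteq> w (n - 1)" using inj_onD[OF inj, of 1 "n - 1"] n by auto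
  ultimately have "c = w 1 \<or> c = w (n - 1)"
    using degree_le_2[OF nbw_edge[of 0]] assms(2) 0 by fastforce
  then show ?thesis using 0 n by auto
next
  case (Suc i')
  then show ?thesis using nbw_neighbours[of i' c] nbw_mod assms by auto
qed

lemma nbw_image: "w ` {0..<n} = V"
proof
  show "w ` {0..<n} \<subseteq> V" using nbw_in_V by blast
next
  have closed: "walk E k u v \<Longrightarrow> u \<in> w ` {0..<n} \<Longrightarrow> v \<in> w ` {0..<n}" for k u v
  proof (induction rule: walk.induct)
    case (walkS u u' k v)
    then obtain i where "i < n" "u = w i" by auto
    then have "u' = w ((i + n - 1) mod n) \<or> u' = w (Suc i mod n)"
      using nbw_neighbours_mod walkS.hyps(1) by blast
    then have "u' \<in> w ` {0..<n}" using n by auto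
    then show ?case using walkS.IH by blast
  qed
  have "x \<in> w ` {0..<n}" using n by (intro image_eqI[of _ _ 0]) auto
  then show "V \<subseteq> w ` {0..<n}"
    using closed connected edge_in_V(1)[OF xy] unfolding connected_graph_def by blast
qed

lemma nbw_edge_iff:
  assumes "i < n" "j < n"
  shows "E (w i) (w j) \<longleftrightarrow> j = Suc i mod n \<or> i = Suc j mod n"
proof
  assume "E (w i) (w j)"
  then have "w j = w ((i + n - 1) mod n) \<or> w j = w (Suc i mod n)"
    using nbw_neighbours_mod assms(1) by blast
  then have "j = (i + n - 1) mod n \<or> j = Suc i mod n"
    using inj_onD[OF inj] assms n by auto
  then show "j = Suc i mod n \<or> i = Suc j mod n"
    using assms by (cases i) auto
next
  assume "j = Suc i mod n \<or> i = Suc j mod n"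
  then show "E (w i) (w j)"
    using nbw_edge nbw_mod assms edge_sym by metis
qed

end

end

lemma is_cycle_graph: "is_cycle_graph V E"
proof -
  obtain x y where xy: "E x y"
    using degree_ge_2 connected unfolding connected_graph_def simple_graph_def by blast
  let ?w = "nonbacktracking_walk E x y"
  have "\<not> inj ?w"
    using finite_subset[OF _ finite_V] nbw_in_V[OF xy] finite_imageD
    by (metis image_subsetI infinite_UNIV_nat)
  then have "\<exists>n. \<exists>i<n. ?w i = ?w n"
    unfolding inj_def by (metis linorder_neqE_nat)
  \<comment> \<open>Stop the walk at its first repeated vertex, which must be the starting vertex.\<close>
  define n where "n = (LEAST n. \<exists>i<n. ?w i = ?w n)"
  obtain i where "i < n" "?w i = ?w n"
    using LeastI_ex[OF \<open>\<exists>n. \<exists>i<n. ?w i = ?w n\<close>] unfolding n_def by blast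
  moreover have first: "\<And>i j. i < j \<Longrightarrow> j < n \<Longrightarrow> ?w i \<noteq> ?w j"
    unfolding n_def using not_less_Least by blast
  ultimately have closing: "?w n = ?w 0"
    using nbw_first_repetition[OF xy] by metis
  then have n: "3 \<le> n" using nbw_cycle_length[OF xy] \<open>i < n\<close> by simp
  have inj: "inj_on ?w {0..<n}"
    using first by (intro inj_onI) (metis atLeastLessThan_iff linorder_neqE_nat)
  have "bij_betw ?w {0..<n} V"
    unfolding bij_betw_def using inj nbw_image[OF xy n closing inj] by blast
  moreover have "\<forall>i<n. \<forall>j<n. E (?w i) (?w j) \<longleftrightarrow> (j = Suc i mod n \<or> i = Suc j mod n)"
    using nbw_edge_iff[OF xy n closing inj] by blast
  ultimately show ?thesis unfolding is_cycle_graph_def using n by blast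
qed

end

section \<open>Distances on a cycle\<close>

definition cycle_dist :: "nat \<Rightarrow> nat \<Rightarrow> nat \<Rightarrow> nat" where
  "cycle_dist n i j = min (if i \<le> j then j - i else i - j) (n - (if i \<le> j then j - i else i - j))"

lemma cycle_dist_self [simp]: "cycle_dist n i i = 0"
  by (simp add: cycle_dist_def)

lemma cycle_dist_step:
  "i < n \<Longrightarrow> i' < n \<Longrightarrow> j < n \<Longrightarrow> i' = Suc i mod n \<or> i = Suc i' mod n \<Longrightarrow>
    cycle_dist n i j \<le> Suc (cycle_dist n i' j)"
  unfolding cycle_dist_def mod_Suc by (auto split: if_splits)

lemma cycle_dist_eq_iff:
  assumes "i < n" "j < n" "p < n"
  shows "cycle_dist n i p = cycle_dist n j p \<longleftrightarrow>
    i = j \<or> i + j = 2 * p \<or> i + j = 2 * p + n \<or> i + j + n = 2 * p"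
proof (cases "i \<le> p"; cases "j \<le> p")
qed (use assms in \<open>auto simp: cycle_dist_def min_def\<close>)

lemma odd_cycle_dist_inj:
  assumes "odd n" "i < n" "j < n" "p < n" "q < n" "p \<noteq> q"
    and "cycle_dist n i p = cycle_dist n j p" "cycle_dist n i q = cycle_dist n j q"
  shows "i = j"
proof (rule ccontr)
  assume "i \<noteq> j"
  then have p: "i + j = 2 * p \<or> i + j = 2 * p + n \<or> i + j + n = 2 * p"
    and q: "i + j = 2 * q \<or> i + j = 2 * q + n \<or> i + j + n = 2 * q"
    using assms cycle_dist_eq_iff by blast+
  show False
  proof (cases "even (i + j)")
    case True
    then have "i + j \<noteq> 2 * p + n" "i + j + n \<noteq> 2 * p" "i + j \<noteq> 2 * q + n" "i + j + n \<noteq> 2 * q"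
      using assms(1) by presburger+
    then have "i + j = 2 * p" "i + j = 2 * q" using p q by auto
    then show False using assms(6) by simp
  next
    case False
    then have "i + j \<noteq> 2 * p" "i + j \<noteq> 2 * q" by presburger+
    then have "i + j = 2 * p + n \<or> i + j + n = 2 * p" "i + j = 2 * q + n \<or> i + j + n = 2 * q"
      using p q by auto
    then show False using assms(4-6) by linarith
  qed
qed

lemma odd_cycle_dist_mirror:
  assumes "odd n" "p < n" "q < n" "p \<noteq> q"
  shows "\<exists>r<n. r \<noteq> p \<and> r \<noteq> q \<and> cycle_dist n r q = cycle_dist n p q"
proof -
  have parity: "2 * p \<noteq> 2 * q + n" "2 * p + n \<noteq> 2 * q" using assms(1) by presburger+
  consider "2 * q < p" | "p \<le> 2 * q" "2 * q < p + n" | "p + n \<le> 2 * q" by linarith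
  then obtain r where "r < n" "r \<noteq> p" "r \<noteq> q"
    and "r + p = 2 * q \<or> r + p = 2 * q + n \<or> r + p + n = 2 * q"
  proof cases
    case 1
    then show ?thesis using assms parity by (intro that[of "2 * q + n - p"]) auto
  next
    case 2
    then show ?thesis using assms by (intro that[of "2 * q - p"]) auto
  next
    case 3
    then show ?thesis using assms parity by (intro that[of "2 * q - p - n"]) auto
  qed
  then show ?thesis using cycle_dist_eq_iff[of r n p q] assms(2,3) by blast
qed

locale cycle_graph = connected_simple_graph +
  fixes f :: "nat \<Rightarrow> 'a" and n :: nat
  assumes length_ge_3: "3 \<le> n" and bij: "bij_betw f {0..<n} V"
    and edge_iff: "i < n \<Longrightarrow> j < n \<Longrightarrow> E (f i) (f j) \<longleftrightarrow> j = Suc i mod n \<or> i = Suc j mod n"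

begin

lemma card_V: "card V = n"
  using bij_betw_same_card[OF bij] by simp

lemma f_in_V: "i < n \<Longrightarrow> f i \<in> V"
  using bij_betw_apply[OF bij] by simp

lemma f_eq_iff: "i < n \<Longrightarrow> j < n \<Longrightarrow> f i = f j \<longleftrightarrow> i = j"
  using bij unfolding bij_betw_def inj_on_def by auto

lemma V_cases:
  assumes "v \<in> V"
  obtains i where "i < n" "v = f i"
  using assms bij unfolding bij_betw_def by auto

lemma walk_forward: "i < n \<Longrightarrow> walk E m (f i) (f ((i + m) mod n))"
proof (induction m arbitrary: i)
  case 0
  then show ?case by (simp add: walk.intros)
next
  case (Suc m)
  have "E (f i) (f (Suc i mod n))" using edge_iff Suc.prems length_ge_3 by simp
  moreover have "walk E m (f (Suc i mod n)) (f ((i + Suc m) mod n))"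
    using Suc.IH[of "Suc i mod n"] length_ge_3 by (simp add: mod_add_left_eq)
  ultimately show ?case by (rule walk.walkS)
qed

lemma cycle_dist_le_walk:
  "walk E k u v \<Longrightarrow> i < n \<Longrightarrow> j < n \<Longrightarrow> u = f i \<Longrightarrow> v = f j \<Longrightarrow> cycle_dist n i j \<le> k"
proof (induction arbitrary: i rule: walk.induct)
  case (walk0 u)
  then show ?case using f_eq_iff by simp
next
  case (walkS u u' k v)
  obtain i' where i': "i' < n" "u' = f i'" using V_cases edge_in_V(2)[OF walkS.hyps(1)] by blast
  then have "i' = Suc i mod n \<or> i = Suc i' mod n" using edge_iff walkS by blast
  then show ?case using cycle_dist_step[of i n i' j] walkS.IH[OF i'(1)] walkS.prems i' by fastforce
qed

lemma gdist_f_eq_cycle_dist: "i < n \<Longrightarrow> j < n \<Longrightarrow> gdist E (f i) (f j) = cycle_dist n i j"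
proof -
  assume ij: "i < n" "j < n"
  have "(i + (if i \<le> j then j - i else j + n - i)) mod n = j"
    "(j + (if j \<le> i then i - j else i + n - j)) mod n = i" using ij by auto
  then have "gdist E (f i) (f j) \<le> (if i \<le> j then j - i else j + n - i)"
    "gdist E (f i) (f j) \<le> (if j \<le> i then i - j else i + n - j)"
    using gdist_le[OF walk_forward[OF ij(1)]] gdist_le[OF walk_reverse[OF walk_forward[OF ij(2)]]]
    by metis+
  then have "gdist E (f i) (f j) \<le> cycle_dist n i j"
    using ij unfolding cycle_dist_def by (auto simp: min_def split: if_splits)
  moreover have "cycle_dist n i j \<le> gdist E (f i) (f j)"
    using cycle_dist_le_walk[OF gdist_walk[OF f_in_V f_in_V]] ij by blast
  ultimately show ?thesis by simp
qed

lemma resolving_pair_if_odd: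
  assumes "odd n" "a \<in> V" "b \<in> V" "a \<noteq> b"
  shows "resolving_set V E {a, b}"
  unfolding resolving_set_def
proof (intro conjI ballI impI)
  fix y z assume "y \<in> V" "z \<in> V" "y \<noteq> z"
  moreover obtain p q i j where "p < n" "q < n" "i < n" "j < n" "a = f p" "b = f q" "y = f i" "z = f j"
    using V_cases assms(2,3) \<open>y \<in> V\<close> \<open>z \<in> V\<close> by metis
  ultimately show "\<exists>x\<in>{a, b}. gdist E y x \<noteq> gdist E z x"
    using odd_cycle_dist_inj[OF assms(1)] gdist_f_eq_cycle_dist assms(4) by auto
qed (use assms in auto)

lemma equidistant_vertex_if_odd:
  assumes "odd n" "u \<in> V" "v \<in> V" "u \<noteq> v"
  shows "\<exists>x\<in>V. x \<noteq> u \<and> x \<noteq> v \<and> gdist E x v = gdist E u v"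
proof -
  obtain p q where pq: "p < n" "q < n" "u = f p" "v = f q"
    using V_cases assms(2,3) by metis
  then obtain r where "r < n" "r \<noteq> p" "r \<noteq> q" "cycle_dist n r q = cycle_dist n p q"
    using odd_cycle_dist_mirror[OF assms(1)] assms(4) by metis
  then show ?thesis using pq f_in_V f_eq_iff gdist_f_eq_cycle_dist by (intro bexI[of _ "f r"]) auto
qed

lemma wtr_sets_if_odd:
  assumes "odd n"
  shows "(\<forall>W\<subseteq>V. card W = 3 \<longrightarrow> wtr_set V E W) \<and> (\<forall>W. card W \<le> 2 \<longrightarrow> \<not> wtr_set V E W)"
proof (intro conjI allI impI)
  show "wtr_set V E W" if "W \<subseteq> V" "card W = 3" for W
    using wtr_set_if_pairs_resolving[OF resolving_pair_if_odd[OF assms]] that by simp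
next
  fix W :: "'a set" assume W: "card W \<le> 2"
  show "\<not> wtr_set V E W"
  proof (cases "card W \<le> 1")
    case True
    then show ?thesis using not_wtr_set_if_card_le_1 card_V length_ge_3 by simp
  next
    case False
    then obtain u v where "W = {u, v}" "u \<noteq> v"
      using W by (metis card_2_iff le_antisym not_less_eq_eq numeral_2_eq_2 One_nat_def)
    then show ?thesis
      using equidistant_vertex_if_odd[OF assms] not_wtr_set_pair_if_equidistant
      by (metis insert_subset resolving_set_def wtr_set_def)
  qed
qed

lemma non_wtr_triple_if_even:
  assumes "even n"
  shows "\<exists>W\<subseteq>V. card W = 3 \<and> \<not> wtr_set V E W"
proof -
  define k where "k = Suc (n div 2)"
  have k: "k < n" "2 < k" using assms length_ge_3 unfolding k_def by auto
  let ?W = "{f 0, f 1, f k}"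
  \<comment> \<open>\<open>f 2\<close> and \<open>f 0\<close> are mirror images about both \<open>f 1\<close> and the antipode \<open>f k\<close> of \<open>f 1\<close>.\<close>
  have "cycle_dist n 2 1 = cycle_dist n 0 1" "cycle_dist n 2 k = cycle_dist n 0 k"
    using cycle_dist_eq_iff[of 2 n 0] length_ge_3 k assms unfolding k_def by auto
  then have "gdist E (f 2) w = gdist E (f 0) w" if "w \<in> ?W - {f 0}" for w
    using that gdist_f_eq_cycle_dist length_ge_3 k by auto
  moreover have "f 2 \<in> V - ?W" "card ?W = 3" "?W \<subseteq> V"
    using f_in_V f_eq_iff length_ge_3 k by auto
  ultimately show ?thesis unfolding wtr_set_def by blast
qed

end

lemma (in connected_simple_graph) wtr_sets_if_odd_cycle:
  assumes "is_cycle_graph V E" "odd (card V)"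
  shows "3 \<le> card V \<and> (\<forall>W\<subseteq>V. card W = 3 \<longrightarrow> wtr_set V E W) \<and>
    (\<forall>W. card W \<le> 2 \<longrightarrow> \<not> wtr_set V E W)"
proof -
  obtain f n where "cycle_graph V E f n"
    using assms(1) connected unfolding is_cycle_graph_def cycle_graph_def cycle_graph_axioms_def
      connected_simple_graph_def by blast
  then interpret cycle_graph V E f n .
  show ?thesis using wtr_sets_if_odd assms(2) card_V length_ge_3 by simp
qed

lemma (in connected_simple_graph) odd_cycle_if_wtr_sets:
  assumes "3 \<le> card V" and triples: "\<forall>W\<subseteq>V. card W = 3 \<longrightarrow> wtr_set V E W"
    and pairs: "\<forall>W. card W \<le> 2 \<longrightarrow> \<not> wtr_set V E W"
  shows "is_cycle_graph V E \<and> odd (card V)"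
proof -
  note degree_le_2 = degree_le_2_if_triples_wtr[OF triples]
  have degree_ge_2: "\<exists>a b. a \<noteq> b \<and> E v a \<and> E v b" if "v \<in> V" for v
  proof (rule ccontr)
    assume "\<nexists>a b. a \<noteq> b \<and> E v a \<and> E v b"
    then have "\<And>a b. E v a \<Longrightarrow> E v b \<Longrightarrow> a = b" by blast
    moreover have "2 \<le> card V" using assms(1) by linarith
    ultimately have "\<exists>z. z \<noteq> v \<and> wtr_set V E {v, z}"
      using degree_le_2 that by (intro wtr_pair_at_pendant)
    then obtain z where "z \<noteq> v" "wtr_set V E {v, z}" by blast
    then show False using pairs by (simp add: card_insert_if)
  qed
  have "two_regular_graph V E"
    using connected_simple_graph_axioms degree_le_2 degree_ge_2
    unfolding two_regular_graph_def two_regular_graph_axioms_def by blast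
  then have cycle: "is_cycle_graph V E" by (rule two_regular_graph.is_cycle_graph)
  then obtain f n where "cycle_graph V E f n"
    using connected unfolding is_cycle_graph_def cycle_graph_def cycle_graph_axioms_def
      connected_simple_graph_def by blast
  then interpret cycle_graph V E f n .
  have "odd n"
  proof
    assume "even n"
    then obtain W where "W \<subseteq> V" "card W = 3" "\<not> wtr_set V E W"
      using non_wtr_triple_if_even by blast
    then show False using triples by blast
  qed
  then show ?thesis using cycle card_V by simp
qed

theorem corollary5:
  fixes V :: "'a set" and E :: "'a \<Rightarrow> 'a \<Rightarrow> bool"
  assumes "connected_graph V E"
  shows "randomly_weak_total_dim V E 3 \<longleftrightarrow> is_cycle_graph V E \<and> odd (card V)"
proof -
  interpret connected_simple_graph V E by (rule connected_simple_graph.intro) (fact assms)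
  show ?thesis
    unfolding randomly_weak_total_dim_3_iff
    by (meson odd_cycle_if_wtr_sets wtr_sets_if_odd_cycle)
qed

end
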